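(* (1) For fixed $x$, $\tau_*(x,t)$ and $\tau^*(x,t)$ are monotonically increasing in $t$, and for fixed $t$ they are monotonically decreasing in $x$. Moreover, for $t_1<t_2$ one has $\tau^*(x,t_1)\le\tau_*(x,t_2)$, and for $x_1<x_2$ one has $\tau_*(x_1,t)\ge\tau^*(x_2,t)$. (2) For fixed $t$, $y_*(x,t)$ and $y^*(x,t)$ are monotonically increasing in $x$, and for $x_1<x_2$ one has $y^*(x_1,t)\le y_*(x_2,t)$. (3) $\tau_*(0,t)=\tau^*(0,t)=t$. (4) $y_*$ is lower semicontinuous and $y^*$ is upper semicontinuous (as functions of $(x,t)$). (5) $\tau_*$ is lower semicontinuous and $\tau^*$ is upper semicontinuous.
   Context: Standing assumptions: $u_0,u_b:[0,\infty)\to\mathbb{R}$ bounded measurable with $u_b>0$; $\rho_0,\rho_b:[0,\infty)\to(0,\infty)$ positive locally bounded measurable. For $x,t,y,\tau\ge0$: $F(y,x,t)=\int_0^y[tu_0(\eta)+\eta-x]\rho_0(\eta)\,d\eta$, $G(\tau,x,t)=\int_0^\tau[x-u_b(\eta)(t-\eta)]\rho_b(\eta)u_b(\eta)\,d\eta$. The minima $\min_{y\ge0}F(y,x,t)$ and $\min_{\tau\ge0}G(\tau,x,t)$ are attained; $y_*(x,t)$, $y^*(x,t)$ denote the smallest and largest minimizers of $y\mapsto F(y,x,t)$, and $\tau_*(x,t)$, $\tau^*(x,t)$ the smallest and largest minimizers of $\tau\mapsto G(\tau,x,t)$. *)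

theory Defs
  imports "HOL-Analysis.Analysis"
begin

definition Ffun :: "(real \<Rightarrow> real) \<Rightarrow> (real \<Rightarrow> real) \<Rightarrow> real \<Rightarrow> real \<Rightarrow> real \<Rightarrow> real" where
  "Ffun u0 rho0 y x t = (LINT \<eta>:{0..y}|lborel. (t * u0 \<eta> + \<eta> - x) * rho0 \<eta>)"

definition Gfun :: "(real \<Rightarrow> real) \<Rightarrow> (real \<Rightarrow> real) \<Rightarrow> real \<Rightarrow> real \<Rightarrow> real \<Rightarrow> real" where
  "Gfun ub rhob \<tau> x t = (LINT \<eta>:{0..\<tau>}|lborel. (x - ub \<eta> * (t - \<eta>)) * rhob \<eta> * ub \<eta>)"

definition minimizers :: "(real \<Rightarrow> real) \<Rightarrow> real set" where
  "minimizers h = {y. 0 \<le> y \<and> (\<forall>z\<ge>0. h y \<le> h z)}"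

definition ylow :: "(real \<Rightarrow> real) \<Rightarrow> (real \<Rightarrow> real) \<Rightarrow> real \<Rightarrow> real \<Rightarrow> real" where
  "ylow u0 rho0 x t = Inf (minimizers (\<lambda>y. Ffun u0 rho0 y x t))"

definition yup :: "(real \<Rightarrow> real) \<Rightarrow> (real \<Rightarrow> real) \<Rightarrow> real \<Rightarrow> real \<Rightarrow> real" where
  "yup u0 rho0 x t = Sup (minimizers (\<lambda>y. Ffun u0 rho0 y x t))"

definition taulow :: "(real \<Rightarrow> real) \<Rightarrow> (real \<Rightarrow> real) \<Rightarrow> real \<Rightarrow> real \<Rightarrow> real" where
  "taulow ub rhob x t = Inf (minimizers (\<lambda>\<tau>. Gfun ub rhob \<tau> x t))"

definition tauup :: "(real \<Rightarrow> real) \<Rightarrow> (real \<Rightarrow> real) \<Rightarrow> real \<Rightarrow> real \<Rightarrow> real" where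
  "tauup ub rhob x t = Sup (minimizers (\<lambda>\<tau>. Gfun ub rhob \<tau> x t))"

definition lsc_on :: "'a::topological_space set \<Rightarrow> ('a \<Rightarrow> real) \<Rightarrow> bool" where
  "lsc_on D f \<longleftrightarrow> (\<forall>p\<in>D. \<forall>c. c < f p \<longrightarrow> eventually (\<lambda>q. c < f q) (at p within D))"

definition usc_on :: "'a::topological_space set \<Rightarrow> ('a \<Rightarrow> real) \<Rightarrow> bool" where
  "usc_on D f \<longleftrightarrow> (\<forall>p\<in>D. \<forall>c. f p < c \<longrightarrow> eventually (\<lambda>q. f q < c) (at p within D))"

end

theory Submission
  imports Defs
begin

(* F and G are primitives of locally bounded integrands, so they are continuous in the
   minimization variable and affine in (x, t):
     F(y,x,t) = A(y) - x R(y) + t U(y),   R(y) = int_0^y rho0,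
     G(tau,x,t) = A'(tau) + x R'(tau) - t U'(tau),   R' = int_0 rhob ub,  U' = int_0 ub^2 rhob,
   with R, R', U' strictly increasing.  Raising x in F, or t in G, subtracts a strictly increasing
   function of the minimization variable, which can only move minimizers to the right; raising x
   in G moves them to the left.  For x = 0 the integrand of G is negative
   before t and positive after it, so t is the only minimizer (3).  Since the dependence on (x, t)
   is uniform on compact intervals, a compact interval free of minimizers at (x, t) stays free of
   minimizers nearby: the minimum of the limit function over it exceeds the global minimum by a
   margin.  Applied to [0, c] and, using local bounds on the minimizers, to [c, Y], this gives the
   semicontinuity statements (4) and (5). *)

section \<open>Locally bounded measurable functions and their primitives\<close>

definition loc_bdd_measurable :: "(real \<Rightarrow> real) \<Rightarrow> bool" where
  "loc_bdd_measurable g \<longleftrightarrow> set_borel_measurable lborel {0..} g \<and> (\<forall>M. bounded (g ` {0..M}))"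

lemma set_borel_measurable_iff_restrict_space:
  "set_borel_measurable lborel {0..} g \<longleftrightarrow> g \<in> borel_measurable (restrict_space lborel {0..})"
  for g :: "real \<Rightarrow> real"
  by (simp add: set_borel_measurable_def borel_measurable_restrict_space_iff)

lemma loc_bdd_measurable_const [simp]: "loc_bdd_measurable (\<lambda>_. c)"
  by (simp add: loc_bdd_measurable_def set_borel_measurable_iff_restrict_space image_constant_conv)

lemma loc_bdd_measurable_ident [simp]: "loc_bdd_measurable (\<lambda>\<eta>. \<eta>)"
  by (simp add: loc_bdd_measurable_def set_borel_measurable_iff_restrict_space measurable_restrict_space1)

lemma loc_bdd_measurable_add [simp]:
  "loc_bdd_measurable f \<Longrightarrow> loc_bdd_measurable g \<Longrightarrow> loc_bdd_measurable (\<lambda>\<eta>. f \<eta> + g \<eta>)"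
  by (simp add: loc_bdd_measurable_def set_borel_measurable_iff_restrict_space bounded_plus_comp
      borel_measurable_add)

lemma loc_bdd_measurable_diff [simp]:
  "loc_bdd_measurable f \<Longrightarrow> loc_bdd_measurable g \<Longrightarrow> loc_bdd_measurable (\<lambda>\<eta>. f \<eta> - g \<eta>)"
  by (simp add: loc_bdd_measurable_def set_borel_measurable_iff_restrict_space bounded_minus_comp
      borel_measurable_diff)

lemma bounded_mult_comp:
  fixes f g :: "'a \<Rightarrow> real"
  assumes "bounded (f ` S)" "bounded (g ` S)"
  shows "bounded ((\<lambda>x. f x * g x) ` S)"
proof -
  obtain B C where "\<forall>x\<in>S. \<bar>f x\<bar> \<le> B" "\<forall>x\<in>S. \<bar>g x\<bar> \<le> C"
    using assms by (auto simp: bounded_iff)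
  then have "\<forall>x\<in>S. \<bar>f x * g x\<bar> \<le> B * C"
    by (auto simp: abs_mult intro: mult_mono')
  then show ?thesis by (auto simp: bounded_iff)
qed

lemma loc_bdd_measurable_mult [simp]:
  "loc_bdd_measurable f \<Longrightarrow> loc_bdd_measurable g \<Longrightarrow> loc_bdd_measurable (\<lambda>\<eta>. f \<eta> * g \<eta>)"
  by (simp add: loc_bdd_measurable_def set_borel_measurable_iff_restrict_space bounded_mult_comp
      borel_measurable_times)

lemma set_integrable_loc_bdd_measurable:
  assumes g: "loc_bdd_measurable g" and S: "S \<in> sets lborel" "S \<subseteq> {0..M}"
  shows "set_integrable lborel S g"
proof -
  obtain B where B: "\<forall>\<eta>\<in>{0..M}. \<bar>g \<eta>\<bar> \<le> B"
    using g by (auto simp: loc_bdd_measurable_def bounded_iff)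
  have "set_integrable lborel {0..M} (\<lambda>_. B)"
    by (rule borel_integrable_atLeastAtMost') simp
  then have "set_integrable lborel S (\<lambda>_. B)"
    using S by (rule set_integrable_subset)
  moreover have "set_borel_measurable lborel S g"
    using g S
    by (intro set_borel_measurable_subset[of _ "{0..}", OF _ S(1)]) (auto simp: loc_bdd_measurable_def)
  moreover have "AE \<eta> in lborel. \<eta> \<in> S \<longrightarrow> norm (g \<eta>) \<le> norm B"
    using B S by (intro AE_I2) force
  ultimately show ?thesis by (rule set_integrable_bound)
qed

definition prim :: "(real \<Rightarrow> real) \<Rightarrow> real \<Rightarrow> real" where
  "prim g y = (LINT \<eta>:{0..y}|lborel. g \<eta>)"

lemma prim_add:
  "loc_bdd_measurable f \<Longrightarrow> loc_bdd_measurable g \<Longrightarrow> prim (\<lambda>\<eta>. f \<eta> + g \<eta>) y = prim f y + prim g y"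
  by (simp add: prim_def set_integral_add set_integrable_loc_bdd_measurable[where M=y])

lemma prim_diff:
  "loc_bdd_measurable f \<Longrightarrow> loc_bdd_measurable g \<Longrightarrow> prim (\<lambda>\<eta>. f \<eta> - g \<eta>) y = prim f y - prim g y"
  by (simp add: prim_def set_integral_diff set_integrable_loc_bdd_measurable[where M=y])

lemma prim_mult_right: "prim (\<lambda>\<eta>. c * g \<eta>) y = c * prim g y"
  by (simp add: prim_def)

lemma prim_minus: "prim (\<lambda>\<eta>. - g \<eta>) y = - prim g y"
  by (simp add: prim_def set_lebesgue_integral_def)

lemma prim_eq_prim_plus_Ioc:
  assumes g: "loc_bdd_measurable g" and "0 \<le> a" "a \<le> b"
  shows "prim g b = prim g a + (LINT \<eta>:{a<..b}|lborel. g \<eta>)"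
proof -
  have "{0..b} = {0..a} \<union> {a<..b}" using assms by auto
  moreover have "(LINT \<eta>:{0..a} \<union> {a<..b}|lborel. g \<eta>) =
      (LINT \<eta>:{0..a}|lborel. g \<eta>) + (LINT \<eta>:{a<..b}|lborel. g \<eta>)"
    using assms by (intro set_integral_Un set_integrable_loc_bdd_measurable[OF g, where M=b]) auto
  ultimately show ?thesis unfolding prim_def by simp
qed

lemma prim_strict_mono:
  assumes g: "loc_bdd_measurable g" and "0 \<le> a" "a < b"
    and pos: "\<And>\<eta>. a < \<eta> \<Longrightarrow> \<eta> < b \<Longrightarrow> 0 < g \<eta>"
  shows "prim g a < prim g b"
proof -
  let ?h = "\<lambda>\<eta>. indicator {a<..b} \<eta> *\<^sub>R g \<eta>"
  have "set_integrable lborel {a<..b} g"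
    using assms by (intro set_integrable_loc_bdd_measurable[OF g, where M=b]) auto
  then have int: "integrable lborel ?h"
    by (simp add: set_integrable_def)
  have nonneg: "AE \<eta> in lborel. 0 \<le> ?h \<eta>"
    using AE_lborel_singleton[of b]
    by eventually_elim (use pos in \<open>auto split: split_indicator intro: less_imp_le\<close>)
  have "integral\<^sup>L lborel ?h \<noteq> 0"
  proof
    assume "integral\<^sup>L lborel ?h = 0"
    then have "AE \<eta> in lborel. ?h \<eta> = 0"
      using integral_nonneg_eq_0_iff_AE[OF int nonneg] by simp
    then have "AE \<eta> in lborel. \<eta> \<notin> {a<..<b}"
      by eventually_elim (use pos in \<open>force split: split_indicator\<close>)
    then have "{a<..<b} \<in> null_sets lborel"
      by (subst AE_iff_null_sets) auto
    then have "emeasure lborel {a<..<b} = 0"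
      by (rule null_setsD1)
    then show False using \<open>a < b\<close> by simp
  qed
  with integral_nonneg_AE[OF nonneg] have "0 < (LINT \<eta>:{a<..b}|lborel. g \<eta>)"
    unfolding set_lebesgue_integral_def by linarith
  moreover have "prim g b = prim g a + (LINT \<eta>:{a<..b}|lborel. g \<eta>)"
    using assms by (intro prim_eq_prim_plus_Ioc) auto
  ultimately show ?thesis by linarith
qed

lemma strict_mono_on_prim:
  "loc_bdd_measurable g \<Longrightarrow> (\<And>\<eta>. 0 < \<eta> \<Longrightarrow> 0 < g \<eta>) \<Longrightarrow> strict_mono_on {0..} (prim g)"
  by (rule strict_mono_onI) (auto intro: prim_strict_mono)

lemma continuous_on_prim:
  assumes g: "loc_bdd_measurable g"
  shows "continuous_on {0..M} (prim g)"
proof -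
  have int: "set_integrable lborel {0..y} g" for y
    by (rule set_integrable_loc_bdd_measurable[OF g]) auto
  have "continuous_on {0..M} (\<lambda>y. integral {0..y} g)"
    using int by (intro indefinite_integral_continuous_1 set_borel_integral_eq_integral(1))
  moreover have "prim g y = integral {0..y} g" for y
    unfolding prim_def using int by (rule set_borel_integral_eq_integral(2))
  ultimately show ?thesis by simp
qed

lemma bounded_prim: "loc_bdd_measurable g \<Longrightarrow> bounded (prim g ` {0..M})"
  by (intro compact_imp_bounded compact_continuous_image continuous_on_prim) auto

section \<open>Minimizers of uniformly converging families\<close>

lemma uniform_limit_tendsto_const:
  "(f \<longlongrightarrow> l) F \<Longrightarrow> uniform_limit S (\<lambda>q _. f q) (\<lambda>_. l) F"
  by (auto simp: uniform_limit_iff dest: tendstoD)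

lemma uniform_limit_affine_family:
  fixes A B C :: "real \<Rightarrow> real"
  assumes "bounded (B ` S)" "bounded (C ` S)" "(f \<longlongrightarrow> x) F" "(g \<longlongrightarrow> t) F"
  shows "uniform_limit S (\<lambda>q s. A s + f q * B s + g q * C s) (\<lambda>s. A s + x * B s + t * C s) F"
  using assms
  by (intro uniform_limit_add uniform_limit_const uniform_lim_mult uniform_limit_tendsto_const)
    (auto simp: image_constant_conv)

lemma minimizers_nonneg: "s \<in> minimizers h \<Longrightarrow> 0 \<le> s"
  by (simp add: minimizers_def)

lemma bdd_below_minimizers: "bdd_below (minimizers h)"
  by (auto simp: minimizers_def bdd_below_def)

lemma minimizers_subset_atLeastAtMost:
  assumes "0 \<le> b" "\<And>s. b < s \<Longrightarrow> h b < h s"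
  shows "minimizers h \<subseteq> {0..b}"
proof
  fix s assume "s \<in> minimizers h"
  then have "0 \<le> s" "h s \<le> h b" using \<open>0 \<le> b\<close> by (auto simp: minimizers_def)
  then show "s \<in> {0..b}" using assms(2)[of s] by (cases "b < s") auto
qed

lemma minimizers_eq_singleton:
  assumes "0 \<le> b" "\<And>s. 0 \<le> s \<Longrightarrow> s \<noteq> b \<Longrightarrow> h b < h s"
  shows "minimizers h = {b}"
  using assms by (force simp: minimizers_def intro: less_imp_le)

lemma minimizer_le_minimizer:
  assumes h: "\<And>s. 0 \<le> s \<Longrightarrow> h2 s = h1 s - d * P s" and "0 < d" and P: "strict_mono_on {0..} P"
    and a: "a \<in> minimizers h1" and b: "b \<in> minimizers h2"
  shows "a \<le> b"
proof (rule ccontr)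
  assume "\<not> a \<le> b"
  with P a b have "d * P b < d * P a"
    using \<open>0 < d\<close> by (auto simp: minimizers_def strict_mono_on_def)
  moreover have "h1 a \<le> h1 b" "h2 b \<le> h2 a" and "0 \<le> a" "0 \<le> b"
    using a b by (auto simp: minimizers_def)
  ultimately show False using h[of a] h[of b] by linarith
qed

lemma cSup_le_cInf:
  fixes S T :: "'a::conditionally_complete_lattice set"
  assumes "S \<noteq> {}" "T \<noteq> {}" "\<And>a b. a \<in> S \<Longrightarrow> b \<in> T \<Longrightarrow> a \<le> b"
  shows "Sup S \<le> Inf T"
  using assms by (intro cSup_least cInf_greatest) auto

lemma eventually_minimizers_avoid_interval:
  fixes h :: "'a \<Rightarrow> real \<Rightarrow> real"
  assumes ne: "minimizers (h p) \<noteq> {}"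
    and cont: "\<And>M. continuous_on {0..M} (h p)"
    and unif: "\<And>M. uniform_limit {0..M} h (h p) F"
    and "0 \<le> a" and avoid: "{a..b} \<inter> minimizers (h p) = {}"
  shows "\<forall>\<^sub>F q in F. {a..b} \<inter> minimizers (h q) = {}"
proof (cases "a \<le> b")
  case False
  then show ?thesis by simp
next
  case True
  have "continuous_on {a..b} (h p)"
    by (rule continuous_on_subset[OF cont[of b]]) (use \<open>0 \<le> a\<close> in auto)
  then obtain z where z: "z \<in> {a..b}" "\<And>s. s \<in> {a..b} \<Longrightarrow> h p z \<le> h p s"
    using continuous_attains_inf[of "{a..b}" "h p"] True by auto
  obtain m where m: "m \<in> minimizers (h p)"
    using ne by blast
  have "h p m < h p z"
  proof -
    have "z \<notin> minimizers (h p)" using avoid z(1) by blast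
    then obtain w where "0 \<le> w" "h p w < h p z"
      using z(1) \<open>0 \<le> a\<close> by (force simp: minimizers_def not_le)
    with m show ?thesis by (force simp: minimizers_def)
  qed
  define \<delta> where "\<delta> = h p z - h p m"
  have "0 < \<delta> / 2"
    using \<open>h p m < h p z\<close> by (simp add: \<delta>_def)
  then have "\<forall>\<^sub>F q in F. \<forall>s\<in>{0..max b m}. dist (h q s) (h p s) < \<delta> / 2"
    by (rule uniform_limitD[OF unif])
  then show ?thesis
  proof eventually_elim
    case (elim q)
    have "s \<notin> minimizers (h q)" if s: "s \<in> {a..b}" for s
    proof
      assume "s \<in> minimizers (h q)"
      then have "h q s \<le> h q m" using minimizers_nonneg[OF m] by (simp add: minimizers_def)
      moreover have "dist (h q s) (h p s) < \<delta> / 2" "dist (h q m) (h p m) < \<delta> / 2"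
        using elim s \<open>0 \<le> a\<close> minimizers_nonneg[OF m] by auto
      moreover have "h p z \<le> h p s" using z(2) s .
      ultimately show False using \<delta>_def unfolding dist_real_def by linarith
    qed
    then show ?case by blast
  qed
qed

lemma eventually_less_Inf_minimizers:
  fixes h :: "'a \<Rightarrow> real \<Rightarrow> real"
  assumes ne: "minimizers (h p) \<noteq> {}" and ne_near: "\<forall>\<^sub>F q in F. minimizers (h q) \<noteq> {}"
    and cont: "\<And>M. continuous_on {0..M} (h p)"
    and unif: "\<And>M. uniform_limit {0..M} h (h p) F"
    and c: "c < Inf (minimizers (h p))"
  shows "\<forall>\<^sub>F q in F. c < Inf (minimizers (h q))"
proof -
  define c' where "c' = (c + Inf (minimizers (h p))) / 2"
  have "Inf (minimizers (h p)) \<le> s" if "s \<in> minimizers (h p)" for s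
    using that bdd_below_minimizers by (rule cInf_lower)
  then have "{0..c'} \<inter> minimizers (h p) = {}"
    using c by (force simp: c'_def)
  then have "\<forall>\<^sub>F q in F. {0..c'} \<inter> minimizers (h q) = {}"
    by (rule eventually_minimizers_avoid_interval[OF ne cont unif order_refl])
  with ne_near show ?thesis
  proof eventually_elim
    case (elim q)
    have "c' \<le> s" if "s \<in> minimizers (h q)" for s
    proof -
      have "0 \<le> s" "s \<notin> {0..c'}" using elim that minimizers_nonneg[OF that] by auto
      then show ?thesis by auto
    qed
    then have "c' \<le> Inf (minimizers (h q))"
      using elim by (intro cInf_greatest) auto
    then show ?case using c by (simp add: c'_def)
  qed
qed

lemma eventually_Sup_minimizers_less:
  fixes h :: "'a \<Rightarrow> real \<Rightarrow> real"
  assumes ne: "minimizers (h p) \<noteq> {}" and ne_near: "\<forall>\<^sub>F q in F. minimizers (h q) \<noteq> {}"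
    and bdd: "bdd_above (minimizers (h p))" and bdd_near: "\<forall>\<^sub>F q in F. minimizers (h q) \<subseteq> {..Y}"
    and cont: "\<And>M. continuous_on {0..M} (h p)"
    and unif: "\<And>M. uniform_limit {0..M} h (h p) F"
    and c: "Sup (minimizers (h p)) < c"
  shows "\<forall>\<^sub>F q in F. Sup (minimizers (h q)) < c"
proof -
  define c' where "c' = (Sup (minimizers (h p)) + c) / 2"
  obtain m where m: "m \<in> minimizers (h p)"
    using ne by blast
  have "0 \<le> c'"
    using c cSup_upper[OF m bdd] minimizers_nonneg[OF m] by (simp add: c'_def)
  moreover have "{c'..Y} \<inter> minimizers (h p) = {}"
    using c cSup_upper[OF _ bdd] by (force simp: c'_def)
  ultimately have "\<forall>\<^sub>F q in F. {c'..Y} \<inter> minimizers (h q) = {}"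
    by (rule eventually_minimizers_avoid_interval[OF ne cont unif])
  with ne_near bdd_near show ?thesis
  proof eventually_elim
    case (elim q)
    have "s \<le> c'" if "s \<in> minimizers (h q)" for s
    proof -
      have "s \<le> Y" "s \<notin> {c'..Y}" using elim that by auto
      then show ?thesis by auto
    qed
    then have "Sup (minimizers (h q)) \<le> c'"
      using elim by (intro cSup_least) auto
    then show ?case using c by (simp add: c'_def)
  qed
qed

lemma lsc_on_Inf_minimizers:
  fixes h :: "'a::topological_space \<Rightarrow> real \<Rightarrow> real"
  assumes ne: "\<And>q. q \<in> D \<Longrightarrow> minimizers (h q) \<noteq> {}"
    and cont: "\<And>q M. q \<in> D \<Longrightarrow> continuous_on {0..M} (h q)"
    and unif: "\<And>q M. q \<in> D \<Longrightarrow> uniform_limit {0..M} h (h q) (at q within D)"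
  shows "lsc_on D (\<lambda>q. Inf (minimizers (h q)))"
  unfolding lsc_on_def
proof (intro ballI allI impI)
  fix p c assume "p \<in> D" "c < Inf (minimizers (h p))"
  moreover have "\<forall>\<^sub>F q in at p within D. minimizers (h q) \<noteq> {}"
    using ne by (auto simp: eventually_at_filter)
  ultimately show "\<forall>\<^sub>F q in at p within D. c < Inf (minimizers (h q))"
    using ne cont unif by (blast intro: eventually_less_Inf_minimizers)
qed

lemma usc_on_Sup_minimizers:
  fixes h :: "'a::topological_space \<Rightarrow> real \<Rightarrow> real"
  assumes ne: "\<And>q. q \<in> D \<Longrightarrow> minimizers (h q) \<noteq> {}"
    and bound: "continuous_on D \<beta>" "\<And>q. q \<in> D \<Longrightarrow> minimizers (h q) \<subseteq> {..\<beta> q}"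
    and cont: "\<And>q M. q \<in> D \<Longrightarrow> continuous_on {0..M} (h q)"
    and unif: "\<And>q M. q \<in> D \<Longrightarrow> uniform_limit {0..M} h (h q) (at q within D)"
  shows "usc_on D (\<lambda>q. Sup (minimizers (h q)))"
  unfolding usc_on_def
proof (intro ballI allI impI)
  fix p c assume p: "p \<in> D" and c: "Sup (minimizers (h p)) < c"
  have "\<forall>\<^sub>F q in at p within D. \<beta> q < \<beta> p + 1"
    using bound(1) p by (intro order_tendstoD) (auto simp: continuous_on_def)
  moreover have "minimizers (h q) \<subseteq> {..\<beta> p + 1}" if "q \<in> D" "\<beta> q < \<beta> p + 1" for q
    using bound(2)[OF that(1)] that(2) by auto
  ultimately have "\<forall>\<^sub>F q in at p within D. minimizers (h q) \<subseteq> {..\<beta> p + 1}"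
    by (auto simp: eventually_at_filter elim!: eventually_mono)
  moreover have "\<forall>\<^sub>F q in at p within D. minimizers (h q) \<noteq> {}"
    using ne by (auto simp: eventually_at_filter)
  moreover have "bdd_above (minimizers (h p))"
    using bound(2)[OF p] by (rule bdd_above_mono[OF bdd_above_Iic])
  ultimately show "\<forall>\<^sub>F q in at p within D. Sup (minimizers (h q)) < c"
    using eventually_Sup_minimizers_less[OF ne[OF p] _ _ _ cont[OF p] unif[OF p] c] by blast
qed

section \<open>The functional F of the initial data\<close>

locale initial_data =
  fixes u0 rho0 :: "real \<Rightarrow> real"
  assumes u0_meas: "set_borel_measurable lborel {0..} u0"
    and rho0_meas: "set_borel_measurable lborel {0..} rho0"
    and u0_bdd: "\<exists>B. \<forall>\<eta>\<ge>0. \<bar>u0 \<eta>\<bar> \<le> B"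
    and rho0_pos: "\<forall>\<eta>\<ge>0. rho0 \<eta> > 0"
    and rho0_locbdd: "\<forall>M. \<exists>B. \<forall>\<eta>\<in>{0..M}. rho0 \<eta> \<le> B"
    and F_attained: "\<forall>x\<ge>0. \<forall>t\<ge>0. \<exists>y\<ge>0. \<forall>z\<ge>0. Ffun u0 rho0 y x t \<le> Ffun u0 rho0 z x t"
begin

lemma loc_bdd_measurable_u0 [simp]: "loc_bdd_measurable u0"
  using u0_meas u0_bdd by (force simp: loc_bdd_measurable_def bounded_iff)

lemma loc_bdd_measurable_rho0 [simp]: "loc_bdd_measurable rho0"
proof -
  have "bounded (rho0 ` {0..M})" for M
  proof -
    obtain B where "\<forall>\<eta>\<in>{0..M}. rho0 \<eta> \<le> B"
      using rho0_locbdd by blast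
    with rho0_pos show ?thesis
      by (force simp: bounded_iff)
  qed
  with rho0_meas show ?thesis by (simp add: loc_bdd_measurable_def)
qed

lemma Ffun_eq_prim: "Ffun u0 rho0 y x t = prim (\<lambda>\<eta>. (t * u0 \<eta> + \<eta> - x) * rho0 \<eta>) y"
  by (simp add: Ffun_def prim_def)

lemma Ffun_decomp:
  "Ffun u0 rho0 y x t = prim (\<lambda>\<eta>. \<eta> * rho0 \<eta>) y - x * prim rho0 y + t * prim (\<lambda>\<eta>. u0 \<eta> * rho0 \<eta>) y"
proof -
  have "(\<lambda>\<eta>. (t * u0 \<eta> + \<eta> - x) * rho0 \<eta>) = (\<lambda>\<eta>. (\<eta> * rho0 \<eta> - x * rho0 \<eta>) + t * (u0 \<eta> * rho0 \<eta>))"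
    by (simp add: fun_eq_iff algebra_simps)
  then show ?thesis by (simp add: Ffun_eq_prim prim_add prim_diff prim_mult_right)
qed

lemma continuous_on_Ffun: "continuous_on {0..M} (\<lambda>y. Ffun u0 rho0 y x t)"
  unfolding Ffun_eq_prim by (intro continuous_on_prim) simp

lemma uniform_limit_Ffun:
  "uniform_limit {0..M} (\<lambda>q y. Ffun u0 rho0 y (fst q) (snd q)) (\<lambda>y. Ffun u0 rho0 y (fst p) (snd p))
    (at p within D)"
proof -
  have "uniform_limit {0..M}
      (\<lambda>q y. prim (\<lambda>\<eta>. \<eta> * rho0 \<eta>) y + fst q * - prim rho0 y + snd q * prim (\<lambda>\<eta>. u0 \<eta> * rho0 \<eta>) y)
      (\<lambda>y. prim (\<lambda>\<eta>. \<eta> * rho0 \<eta>) y + fst p * - prim rho0 y + snd p * prim (\<lambda>\<eta>. u0 \<eta> * rho0 \<eta>) y)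
      (at p within D)"
    by (intro uniform_limit_affine_family tendsto_intros) (simp_all add: bounded_prim)
  then show ?thesis by (simp add: Ffun_decomp)
qed

lemma minimizers_Ffun_nonempty: "0 \<le> x \<Longrightarrow> 0 \<le> t \<Longrightarrow> minimizers (\<lambda>y. Ffun u0 rho0 y x t) \<noteq> {}"
  using F_attained by (auto simp: minimizers_def)

lemma minimizers_Ffun_subset:
  assumes "0 \<le> x" "0 \<le> t" and B: "\<And>\<eta>. 0 \<le> \<eta> \<Longrightarrow> \<bar>u0 \<eta>\<bar> \<le> B"
  shows "minimizers (\<lambda>y. Ffun u0 rho0 y x t) \<subseteq> {0..x + t * B}"
proof (rule minimizers_subset_atLeastAtMost)
  have "0 \<le> B" using B[of 0] by linarith
  then show "0 \<le> x + t * B" using assms by simp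
  fix s assume "x + t * B < s"
  show "Ffun u0 rho0 (x + t * B) x t < Ffun u0 rho0 s x t"
    unfolding Ffun_eq_prim
  proof (rule prim_strict_mono)
    fix \<eta> assume \<eta>: "x + t * B < \<eta>" "\<eta> < s"
    then have "0 < \<eta>" using \<open>0 \<le> x + t * B\<close> by linarith
    have "t * (- B) \<le> t * u0 \<eta>"
      using B[of \<eta>] \<open>0 < \<eta>\<close> \<open>0 \<le> t\<close> by (intro mult_left_mono) auto
    then have "0 < t * u0 \<eta> + \<eta> - x" using \<eta> by simp
    then show "0 < (t * u0 \<eta> + \<eta> - x) * rho0 \<eta>"
      using rho0_pos \<open>0 < \<eta>\<close> by simp
  qed (use \<open>0 \<le> x + t * B\<close> \<open>x + t * B < s\<close> in simp_all)
qed

lemma Ffun_minimizer_mono: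
  assumes "x1 < x2" "a \<in> minimizers (\<lambda>y. Ffun u0 rho0 y x1 t)" "b \<in> minimizers (\<lambda>y. Ffun u0 rho0 y x2 t)"
  shows "a \<le> b"
proof (rule minimizer_le_minimizer[OF _ _ _ assms(2,3)])
  show "Ffun u0 rho0 s x2 t = Ffun u0 rho0 s x1 t - (x2 - x1) * prim rho0 s" if "0 \<le> s" for s
    by (simp add: Ffun_decomp algebra_simps)
  show "0 < x2 - x1" using assms by simp
  show "strict_mono_on {0..} (prim rho0)"
    by (rule strict_mono_on_prim) (use rho0_pos in auto)
qed

lemma yup_le_ylow:
  assumes "0 \<le> x1" "x1 < x2" "0 \<le> t"
  shows "yup u0 rho0 x1 t \<le> ylow u0 rho0 x2 t"
  unfolding yup_def ylow_def
  using assms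
  by (intro cSup_le_cInf) (auto simp: minimizers_Ffun_nonempty intro: Ffun_minimizer_mono[OF \<open>x1 < x2\<close>])

lemma ylow_le_yup:
  assumes "0 \<le> x" "0 \<le> t"
  shows "ylow u0 rho0 x t \<le> yup u0 rho0 x t"
proof -
  obtain B where "\<forall>\<eta>\<ge>0. \<bar>u0 \<eta>\<bar> \<le> B" using u0_bdd by blast
  then have "bdd_above (minimizers (\<lambda>y. Ffun u0 rho0 y x t))"
    using assms by (intro bdd_above_mono[OF bdd_above_Icc minimizers_Ffun_subset]) auto
  then show ?thesis
    unfolding ylow_def yup_def
    using assms by (intro cInf_le_cSup minimizers_Ffun_nonempty bdd_below_minimizers)
qed

lemma ylow_yup_mono:
  assumes "0 \<le> x1" "x1 \<le> x2" "0 \<le> t"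
  shows "ylow u0 rho0 x1 t \<le> ylow u0 rho0 x2 t \<and> yup u0 rho0 x1 t \<le> yup u0 rho0 x2 t"
proof (cases "x1 = x2")
  case False
  then have "yup u0 rho0 x1 t \<le> ylow u0 rho0 x2 t"
    using assms by (intro yup_le_ylow) auto
  moreover have "ylow u0 rho0 x1 t \<le> yup u0 rho0 x1 t" "ylow u0 rho0 x2 t \<le> yup u0 rho0 x2 t"
    using assms by (auto intro: ylow_le_yup)
  ultimately show ?thesis by linarith
qed simp

lemma ylow_lsc: "lsc_on ({0..} \<times> {0..}) (\<lambda>p. ylow u0 rho0 (fst p) (snd p))"
  unfolding ylow_def
  by (rule lsc_on_Inf_minimizers[where h = "\<lambda>p y. Ffun u0 rho0 y (fst p) (snd p)"])
    (auto simp: minimizers_Ffun_nonempty intro: continuous_on_Ffun uniform_limit_Ffun)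

lemma yup_usc: "usc_on ({0..} \<times> {0..}) (\<lambda>p. yup u0 rho0 (fst p) (snd p))"
proof -
  obtain B where B: "\<forall>\<eta>\<ge>0. \<bar>u0 \<eta>\<bar> \<le> B" using u0_bdd by blast
  have "minimizers (\<lambda>y. Ffun u0 rho0 y (fst p) (snd p)) \<subseteq> {..fst p + snd p * B}"
    if "p \<in> {0..} \<times> {0..}" for p
    using minimizers_Ffun_subset[of "fst p" "snd p" B] B that by (auto simp: subset_eq)
  then show ?thesis
    unfolding yup_def
    by (intro usc_on_Sup_minimizers[where \<beta> = "\<lambda>p. fst p + snd p * B"])
      (auto simp: minimizers_Ffun_nonempty intro!: continuous_intros continuous_on_Ffun uniform_limit_Ffun)
qed

end

section \<open>The functional G of the boundary data\<close>

locale boundary_data =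
  fixes ub rhob :: "real \<Rightarrow> real"
  assumes ub_meas: "set_borel_measurable lborel {0..} ub"
    and rhob_meas: "set_borel_measurable lborel {0..} rhob"
    and ub_bdd: "\<exists>B. \<forall>\<eta>\<ge>0. \<bar>ub \<eta>\<bar> \<le> B"
    and ub_pos: "\<forall>\<eta>\<ge>0. ub \<eta> > 0"
    and rhob_pos: "\<forall>\<eta>\<ge>0. rhob \<eta> > 0"
    and rhob_locbdd: "\<forall>M. \<exists>B. \<forall>\<eta>\<in>{0..M}. rhob \<eta> \<le> B"
    and G_attained: "\<forall>x\<ge>0. \<forall>t\<ge>0. \<exists>\<tau>\<ge>0. \<forall>s\<ge>0. Gfun ub rhob \<tau> x t \<le> Gfun ub rhob s x t"
begin

lemma loc_bdd_measurable_ub [simp]: "loc_bdd_measurable ub"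
  using ub_meas ub_bdd by (force simp: loc_bdd_measurable_def bounded_iff)

lemma loc_bdd_measurable_rhob [simp]: "loc_bdd_measurable rhob"
proof -
  have "bounded (rhob ` {0..M})" for M
  proof -
    obtain B where "\<forall>\<eta>\<in>{0..M}. rhob \<eta> \<le> B"
      using rhob_locbdd by blast
    with rhob_pos show ?thesis
      by (force simp: bounded_iff)
  qed
  with rhob_meas show ?thesis by (simp add: loc_bdd_measurable_def)
qed

lemma Gfun_eq_prim: "Gfun ub rhob \<tau> x t = prim (\<lambda>\<eta>. (x - ub \<eta> * (t - \<eta>)) * rhob \<eta> * ub \<eta>) \<tau>"
  by (simp add: Gfun_def prim_def)

lemma Gfun_decomp:
  "Gfun ub rhob \<tau> x t = prim (\<lambda>\<eta>. \<eta> * (ub \<eta> * ub \<eta> * rhob \<eta>)) \<tau> + x * prim (\<lambda>\<eta>. rhob \<eta> * ub \<eta>) \<tau>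
    - t * prim (\<lambda>\<eta>. ub \<eta> * ub \<eta> * rhob \<eta>) \<tau>"
proof -
  have "(\<lambda>\<eta>. (x - ub \<eta> * (t - \<eta>)) * rhob \<eta> * ub \<eta>) =
      (\<lambda>\<eta>. (\<eta> * (ub \<eta> * ub \<eta> * rhob \<eta>) + x * (rhob \<eta> * ub \<eta>)) - t * (ub \<eta> * ub \<eta> * rhob \<eta>))"
    by (simp add: fun_eq_iff algebra_simps)
  then show ?thesis by (simp add: Gfun_eq_prim prim_add prim_diff prim_mult_right)
qed

lemma continuous_on_Gfun: "continuous_on {0..M} (\<lambda>\<tau>. Gfun ub rhob \<tau> x t)"
  unfolding Gfun_eq_prim by (intro continuous_on_prim) simp

lemma uniform_limit_Gfun:
  "uniform_limit {0..M} (\<lambda>q \<tau>. Gfun ub rhob \<tau> (fst q) (snd q)) (\<lambda>\<tau>. Gfun ub rhob \<tau> (fst p) (snd p))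
    (at p within D)"
proof -
  have "uniform_limit {0..M}
      (\<lambda>q \<tau>. prim (\<lambda>\<eta>. \<eta> * (ub \<eta> * ub \<eta> * rhob \<eta>)) \<tau> + fst q * prim (\<lambda>\<eta>. rhob \<eta> * ub \<eta>) \<tau>
        + snd q * - prim (\<lambda>\<eta>. ub \<eta> * ub \<eta> * rhob \<eta>) \<tau>)
      (\<lambda>\<tau>. prim (\<lambda>\<eta>. \<eta> * (ub \<eta> * ub \<eta> * rhob \<eta>)) \<tau> + fst p * prim (\<lambda>\<eta>. rhob \<eta> * ub \<eta>) \<tau>
        + snd p * - prim (\<lambda>\<eta>. ub \<eta> * ub \<eta> * rhob \<eta>) \<tau>)
      (at p within D)"
    by (intro uniform_limit_affine_family tendsto_intros) (simp_all add: bounded_prim)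
  then show ?thesis by (simp add: Gfun_decomp)
qed

lemma minimizers_Gfun_nonempty: "0 \<le> x \<Longrightarrow> 0 \<le> t \<Longrightarrow> minimizers (\<lambda>\<tau>. Gfun ub rhob \<tau> x t) \<noteq> {}"
  using G_attained by (auto simp: minimizers_def)

lemma Gfun_less_after:
  assumes "0 \<le> x" "0 \<le> t" "t < s"
  shows "Gfun ub rhob t x t < Gfun ub rhob s x t"
  unfolding Gfun_eq_prim
proof (rule prim_strict_mono)
  fix \<eta> assume \<eta>: "t < \<eta>" "\<eta> < s"
  then have "0 < rhob \<eta>" "0 < ub \<eta>"
    using ub_pos rhob_pos \<open>0 \<le> t\<close> by auto
  moreover from this(2) have "ub \<eta> * (t - \<eta>) < 0"
    using \<eta> by (simp add: mult_pos_neg)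
  ultimately show "0 < (x - ub \<eta> * (t - \<eta>)) * rhob \<eta> * ub \<eta>"
    using \<open>0 \<le> x\<close> by simp
qed (use assms in simp_all)

lemma Gfun_zero_less_before:
  assumes "0 \<le> s" "s < t"
  shows "Gfun ub rhob t 0 t < Gfun ub rhob s 0 t"
proof -
  have "Gfun ub rhob \<tau> 0 t = - prim (\<lambda>\<eta>. ub \<eta> * (t - \<eta>) * rhob \<eta> * ub \<eta>) \<tau>" for \<tau>
    unfolding Gfun_eq_prim prim_minus[symmetric] by simp
  moreover have "prim (\<lambda>\<eta>. ub \<eta> * (t - \<eta>) * rhob \<eta> * ub \<eta>) s < prim (\<lambda>\<eta>. ub \<eta> * (t - \<eta>) * rhob \<eta> * ub \<eta>) t"
  proof (rule prim_strict_mono)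
    fix \<eta> assume "s < \<eta>" "\<eta> < t"
    then show "0 < ub \<eta> * (t - \<eta>) * rhob \<eta> * ub \<eta>"
      using ub_pos rhob_pos \<open>0 \<le> s\<close> by simp
  qed (use assms in simp_all)
  ultimately show ?thesis by simp
qed

lemma minimizers_Gfun_subset:
  "0 \<le> x \<Longrightarrow> 0 \<le> t \<Longrightarrow> minimizers (\<lambda>\<tau>. Gfun ub rhob \<tau> x t) \<subseteq> {0..t}"
  by (rule minimizers_subset_atLeastAtMost) (auto intro: Gfun_less_after)

lemma minimizers_Gfun_zero: "0 \<le> t \<Longrightarrow> minimizers (\<lambda>\<tau>. Gfun ub rhob \<tau> 0 t) = {t}"
  by (rule minimizers_eq_singleton) (auto simp: neq_iff intro: Gfun_less_after Gfun_zero_less_before)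

lemma Gfun_minimizer_mono_t:
  assumes "t1 < t2" "a \<in> minimizers (\<lambda>\<tau>. Gfun ub rhob \<tau> x t1)" "b \<in> minimizers (\<lambda>\<tau>. Gfun ub rhob \<tau> x t2)"
  shows "a \<le> b"
proof (rule minimizer_le_minimizer[OF _ _ _ assms(2,3)])
  show "Gfun ub rhob s x t2 = Gfun ub rhob s x t1 - (t2 - t1) * prim (\<lambda>\<eta>. ub \<eta> * ub \<eta> * rhob \<eta>) s"
    if "0 \<le> s" for s
    by (simp add: Gfun_decomp algebra_simps)
  show "0 < t2 - t1" using assms by simp
  show "strict_mono_on {0..} (prim (\<lambda>\<eta>. ub \<eta> * ub \<eta> * rhob \<eta>))"
    by (rule strict_mono_on_prim) (use ub_pos rhob_pos in auto)
qed

lemma Gfun_minimizer_antimono_x: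
  assumes "x1 < x2" "a \<in> minimizers (\<lambda>\<tau>. Gfun ub rhob \<tau> x2 t)" "b \<in> minimizers (\<lambda>\<tau>. Gfun ub rhob \<tau> x1 t)"
  shows "a \<le> b"
proof (rule minimizer_le_minimizer[OF _ _ _ assms(2,3)])
  show "Gfun ub rhob s x1 t = Gfun ub rhob s x2 t - (x2 - x1) * prim (\<lambda>\<eta>. rhob \<eta> * ub \<eta>) s"
    if "0 \<le> s" for s
    by (simp add: Gfun_decomp algebra_simps)
  show "0 < x2 - x1" using assms by simp
  show "strict_mono_on {0..} (prim (\<lambda>\<eta>. rhob \<eta> * ub \<eta>))"
    by (rule strict_mono_on_prim) (use ub_pos rhob_pos in auto)
qed

lemma taulow_le_tauup:
  assumes "0 \<le> x" "0 \<le> t"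
  shows "taulow ub rhob x t \<le> tauup ub rhob x t"
proof -
  have "bdd_above (minimizers (\<lambda>\<tau>. Gfun ub rhob \<tau> x t))"
    using assms by (intro bdd_above_mono[OF bdd_above_Icc minimizers_Gfun_subset])
  then show ?thesis
    unfolding taulow_def tauup_def
    using assms by (intro cInf_le_cSup minimizers_Gfun_nonempty bdd_below_minimizers)
qed

lemma tauup_le_taulow_t:
  assumes "0 \<le> x" "0 \<le> t1" "t1 < t2"
  shows "tauup ub rhob x t1 \<le> taulow ub rhob x t2"
  unfolding tauup_def taulow_def
  using assms
  by (intro cSup_le_cInf) (auto simp: minimizers_Gfun_nonempty intro: Gfun_minimizer_mono_t[OF \<open>t1 < t2\<close>])

lemma tauup_le_taulow_x:
  assumes "0 \<le> t" "0 \<le> x1" "x1 < x2"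
  shows "tauup ub rhob x2 t \<le> taulow ub rhob x1 t"
  unfolding tauup_def taulow_def
  using assms
  by (intro cSup_le_cInf) (auto simp: minimizers_Gfun_nonempty intro: Gfun_minimizer_antimono_x[OF \<open>x1 < x2\<close>])

lemma taulow_tauup_mono_t:
  assumes "0 \<le> x" "0 \<le> t1" "t1 \<le> t2"
  shows "taulow ub rhob x t1 \<le> taulow ub rhob x t2 \<and> tauup ub rhob x t1 \<le> tauup ub rhob x t2"
proof (cases "t1 = t2")
  case False
  then have "tauup ub rhob x t1 \<le> taulow ub rhob x t2"
    using assms by (intro tauup_le_taulow_t) auto
  moreover have "taulow ub rhob x t1 \<le> tauup ub rhob x t1" "taulow ub rhob x t2 \<le> tauup ub rhob x t2"
    using assms by (auto intro: taulow_le_tauup)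
  ultimately show ?thesis by linarith
qed simp

lemma taulow_tauup_antimono_x:
  assumes "0 \<le> t" "0 \<le> x1" "x1 \<le> x2"
  shows "taulow ub rhob x2 t \<le> taulow ub rhob x1 t \<and> tauup ub rhob x2 t \<le> tauup ub rhob x1 t"
proof (cases "x1 = x2")
  case False
  then have "tauup ub rhob x2 t \<le> taulow ub rhob x1 t"
    using assms by (intro tauup_le_taulow_x) auto
  moreover have "taulow ub rhob x1 t \<le> tauup ub rhob x1 t" "taulow ub rhob x2 t \<le> tauup ub rhob x2 t"
    using assms by (auto intro: taulow_le_tauup)
  ultimately show ?thesis by linarith
qed simp

lemma taulow_tauup_zero: "0 \<le> t \<Longrightarrow> taulow ub rhob 0 t = t \<and> tauup ub rhob 0 t = t"
  by (simp add: taulow_def tauup_def minimizers_Gfun_zero)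

lemma taulow_lsc: "lsc_on ({0..} \<times> {0..}) (\<lambda>p. taulow ub rhob (fst p) (snd p))"
  unfolding taulow_def
  by (rule lsc_on_Inf_minimizers[where h = "\<lambda>p \<tau>. Gfun ub rhob \<tau> (fst p) (snd p)"])
    (auto simp: minimizers_Gfun_nonempty intro: continuous_on_Gfun uniform_limit_Gfun)

lemma tauup_usc: "usc_on ({0..} \<times> {0..}) (\<lambda>p. tauup ub rhob (fst p) (snd p))"
proof -
  have "minimizers (\<lambda>\<tau>. Gfun ub rhob \<tau> (fst p) (snd p)) \<subseteq> {..snd p}" if "p \<in> {0..} \<times> {0..}" for p
    using minimizers_Gfun_subset[of "fst p" "snd p"] that by (auto simp: subset_eq)
  then show ?thesis
    unfolding tauup_def
    by (intro usc_on_Sup_minimizers[where \<beta> = snd])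
      (auto simp: minimizers_Gfun_nonempty intro: continuous_on_snd continuous_on_Gfun uniform_limit_Gfun)
qed

end

theorem lemma2p1:
  fixes u0 ub rho0 rhob :: "real \<Rightarrow> real"
  assumes u0_meas: "set_borel_measurable lborel {0..} u0"
      and ub_meas: "set_borel_measurable lborel {0..} ub"
      and rho0_meas: "set_borel_measurable lborel {0..} rho0"
      and rhob_meas: "set_borel_measurable lborel {0..} rhob"
      and u0_bdd: "\<exists>B. \<forall>\<eta>\<ge>0. \<bar>u0 \<eta>\<bar> \<le> B"
      and ub_bdd: "\<exists>B. \<forall>\<eta>\<ge>0. \<bar>ub \<eta>\<bar> \<le> B"
      and ub_pos: "\<forall>\<eta>\<ge>0. ub \<eta> > 0"
      and rho0_pos: "\<forall>\<eta>\<ge>0. rho0 \<eta> > 0"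
      and rhob_pos: "\<forall>\<eta>\<ge>0. rhob \<eta> > 0"
      and rho0_locbdd: "\<forall>M. \<exists>B. \<forall>\<eta>\<in>{0..M}. rho0 \<eta> \<le> B"
      and rhob_locbdd: "\<forall>M. \<exists>B. \<forall>\<eta>\<in>{0..M}. rhob \<eta> \<le> B"
      and F_attained: "\<forall>x\<ge>0. \<forall>t\<ge>0. \<exists>y\<ge>0. \<forall>z\<ge>0. Ffun u0 rho0 y x t \<le> Ffun u0 rho0 z x t"
      and G_attained: "\<forall>x\<ge>0. \<forall>t\<ge>0. \<exists>\<tau>\<ge>0. \<forall>s\<ge>0. Gfun ub rhob \<tau> x t \<le> Gfun ub rhob s x t"
  shows
    \<comment> \<open>(1)\<close>
    "(\<forall>x\<ge>0. \<forall>t1\<ge>0. \<forall>t2. t1 \<le> t2 \<longrightarrow>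
        taulow ub rhob x t1 \<le> taulow ub rhob x t2 \<and> tauup ub rhob x t1 \<le> tauup ub rhob x t2)
     \<and> (\<forall>t\<ge>0. \<forall>x1\<ge>0. \<forall>x2. x1 \<le> x2 \<longrightarrow>
        taulow ub rhob x2 t \<le> taulow ub rhob x1 t \<and> tauup ub rhob x2 t \<le> tauup ub rhob x1 t)
     \<and> (\<forall>x\<ge>0. \<forall>t1\<ge>0. \<forall>t2. t1 < t2 \<longrightarrow> tauup ub rhob x t1 \<le> taulow ub rhob x t2)
     \<and> (\<forall>t\<ge>0. \<forall>x1\<ge>0. \<forall>x2. x1 < x2 \<longrightarrow> tauup ub rhob x2 t \<le> taulow ub rhob x1 t)
     \<comment> \<open>(2)\<close>
     \<and> (\<forall>t\<ge>0. \<forall>x1\<ge>0. \<forall>x2. x1 \<le> x2 \<longrightarrow>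
        ylow u0 rho0 x1 t \<le> ylow u0 rho0 x2 t \<and> yup u0 rho0 x1 t \<le> yup u0 rho0 x2 t)
     \<and> (\<forall>t\<ge>0. \<forall>x1\<ge>0. \<forall>x2. x1 < x2 \<longrightarrow> yup u0 rho0 x1 t \<le> ylow u0 rho0 x2 t)
     \<comment> \<open>(3)\<close>
     \<and> (\<forall>t\<ge>0. taulow ub rhob 0 t = t \<and> tauup ub rhob 0 t = t)
     \<comment> \<open>(4)\<close>
     \<and> lsc_on ({0..} \<times> {0..}) (\<lambda>p. ylow u0 rho0 (fst p) (snd p))
     \<and> usc_on ({0..} \<times> {0..}) (\<lambda>p. yup u0 rho0 (fst p) (snd p))
     \<comment> \<open>(5)\<close>
     \<and> lsc_on ({0..} \<times> {0..}) (\<lambda>p. taulow ub rhob (fst p) (snd p))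
     \<and> usc_on ({0..} \<times> {0..}) (\<lambda>p. tauup ub rhob (fst p) (snd p))"
proof -
  interpret initial_data u0 rho0
    by unfold_locales fact+
  interpret boundary_data ub rhob
    by unfold_locales fact+
  show ?thesis
    by (intro conjI)
      (simp_all add: taulow_tauup_mono_t taulow_tauup_antimono_x tauup_le_taulow_t tauup_le_taulow_x
        ylow_yup_mono yup_le_ylow taulow_tauup_zero ylow_lsc yup_usc taulow_lsc tauup_usc)
qed

end
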